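(* For every $t>0$ and every $\theta\in\mathbb{R}$, \[ e^{-\theta^2/(2t)} = \frac{1}{\pi} \int_0^{\infty} e^{(\pi^2-\rho^2)/(2t)}\sinh(\rho)\sin\left(\frac{\pi\rho}{t}\right) \frac{d\rho}{\cosh(\rho) + \cosh(\theta)}, \] and \[ \theta e^{-\theta^2/(2t)} = \frac{t\sinh(\theta)}{\pi} \int_0^{\infty} e^{(\pi^2-\rho^2)/(2t)}\sinh(\rho)\sin\left(\frac{\pi\rho}{t}\right) \frac{d\rho}{[\cosh(\rho) + \cosh(\theta)]^2}. \] *)

theory Defs
  imports "HOL-Analysis.Analysis"
begin

end

theory Submission
  imports Defs "HOL-Complex_Analysis.Complex_Analysis" "HOL-Real_Asymp.Real_Asymp"
begin

(*
  Integrate psi z = exp (- z^2 / (2 t)) * coth ((z - theta) / 2) around the boundary of the rectangle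
  [-R, R] x [-pi, pi]. Inside, coth ((z - theta) / 2) has only the simple pole at theta, with residue 2,
  so the contour integral is 4 pi i exp (- theta^2 / (2 t)). On the horizontal edges
  exp (z - theta) = - exp (x - theta), which turns coth into tanh ((x - theta) / 2), and the two Gaussian
  factors differ only in the sign of the phase pi x / t; so the horizontal edges contribute 2 i times the
  integral of exp ((pi^2 - x^2) / (2 t)) sin (pi x / t) tanh ((x - theta) / 2) over [-R, R]. Folding x to -x
  turns the tanh into 2 sinh x / (cosh x + cosh theta), and the vertical edges are O(exp (- R^2 / (2 t))).

  The second identity is the same computation with coth replaced by its derivative: integrating by
  parts around the closed path, the contour integral becomes -4 pi i times the derivative
  - (theta / t) exp (- theta^2 / (2 t)) of the Gaussian at theta.
*)

section \<open>Contour integrals around the rectangle [-R, R] x [-pi, pi]\<close>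

definition strip_rectpath :: "real \<Rightarrow> real \<Rightarrow> complex" where
  "strip_rectpath R = rectpath (Complex (-R) (-pi)) (Complex R pi)"

lemma path_image_strip_rectpath:
  assumes "R > 0"
  shows "path_image (strip_rectpath R) =
           cbox (Complex (-R) (-pi)) (Complex R pi) - box (Complex (-R) (-pi)) (Complex R pi)"
  unfolding strip_rectpath_def using assms by (intro path_image_rectpath_cbox_minus_box) auto

lemma exp_eq_1_small_Im:
  fixes w :: complex
  assumes "exp w = 1" and "\<bar>Im w\<bar> < 2 * pi"
  shows "w = 0"
proof -
  obtain n :: int where n: "Re w = 0" "Im w = of_int (2 * n) * pi"
    using assms(1) unfolding exp_eq_1 by blast
  with assms(2) have "\<bar>of_int n\<bar> * (2 * pi) < 1 * (2 * pi)"
    by (simp add: abs_mult)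
  then have "n = 0"
    by (subst (asm) mult_less_cancel_right) auto
  with n show ?thesis
    by (simp add: complex_eq_iff)
qed

lemma exp_ne_1_on_strip_rectpath:
  assumes R: "\<bar>\<theta>\<bar> < R" and z: "z \<in> path_image (strip_rectpath R)"
  shows "exp (z - of_real \<theta>) \<noteq> 1"
proof
  assume "exp (z - of_real \<theta>) = 1"
  moreover have "\<bar>Im z\<bar> \<le> pi"
    using z R by (auto simp: path_image_strip_rectpath in_cbox_complex_iff)
  then have "\<bar>Im (z - of_real \<theta>)\<bar> < 2 * pi"
    using pi_gt_zero by (simp; linarith)
  ultimately have "z = of_real \<theta>"
    using exp_eq_1_small_Im by fastforce
  with z R show False
    by (auto simp: path_image_strip_rectpath in_box_complex_iff)
qed

definition coth_half :: "complex \<Rightarrow> complex" where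
  "coth_half w = (exp w + 1) / (exp w - 1)"

definition coth_half_deriv :: "complex \<Rightarrow> complex" where
  "coth_half_deriv w = - 2 * exp w / (exp w - 1)\<^sup>2"

lemma has_field_derivative_coth_half:
  assumes "exp w \<noteq> 1"
  shows "(coth_half has_field_derivative coth_half_deriv w) (at w)"
proof -
  have "exp w - 1 \<noteq> 0"
    using assms by simp
  then show ?thesis
    unfolding coth_half_def [abs_def] coth_half_deriv_def
    by (auto intro!: derivative_eq_intros simp: field_simps power2_eq_square)
qed

lemma residue_coth_half:
  fixes f :: "complex \<Rightarrow> complex"
  assumes f: "f holomorphic_on ball z0 1"
  shows "residue (\<lambda>z. f z * coth_half (z - z0)) z0 = 2 * f z0"
proof -
  \<comment> \<open>\<open>residue_simple_pole_deriv\<close> needs a nonvanishing numerator; if \<open>f z0 = 0\<close>, split \<open>f = (f + 1) - 1\<close>.\<close>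
  have simple_pole: "residue (\<lambda>z. g z * coth_half (z - z0)) z0 = 2 * g z0"
    if "g holomorphic_on ball z0 1" "g z0 \<noteq> 0" for g
  proof -
    have "residue (\<lambda>z. g z * (exp (z - z0) + 1) / (exp (z - z0) - 1)) z0
            = g z0 * (exp (z0 - z0) + 1) / 1"
      using that
      by (intro residue_simple_pole_deriv[where s = "ball z0 1"])
         (auto intro!: holomorphic_intros derivative_eq_intros)
    then show ?thesis
      by (simp add: coth_half_def mult.commute)
  qed
  have pole_free: "(\<lambda>z. g z * coth_half (z - z0)) holomorphic_on ball z0 1 - {z0}"
    if "g holomorphic_on ball z0 1" for g
  proof -
    have "exp (z - z0) \<noteq> 1" if "z \<in> ball z0 1 - {z0}" for z
    proof
      assume "exp (z - z0) = 1"
      moreover have "\<bar>Im (z - z0)\<bar> < 2 * pi"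
        using that abs_Im_le_cmod[of "z - z0"] pi_gt3 by (auto simp: dist_norm norm_minus_commute)
      ultimately show False
        using that exp_eq_1_small_Im by fastforce
    qed
    with that show ?thesis
      unfolding coth_half_def by (auto intro!: holomorphic_intros elim: holomorphic_on_subset)
  qed
  show ?thesis
  proof (cases "f z0 = 0")
    case False
    with f show ?thesis by (rule simple_pole)
  next
    case True
    have "residue (\<lambda>z. f z * coth_half (z - z0)) z0
            = residue (\<lambda>z. (f z + 1) * coth_half (z - z0) - 1 * coth_half (z - z0)) z0"
      by (simp add: algebra_simps)
    also have "\<dots> = residue (\<lambda>z. (f z + 1) * coth_half (z - z0)) z0
                     - residue (\<lambda>z. 1 * coth_half (z - z0)) z0"
      using f by (intro residue_diff[of "ball z0 1"] pole_free) (auto intro!: holomorphic_intros)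
    also have "\<dots> = 2 * (f z0 + 1) - 2 * 1"
      using f True by (intro arg_cong2[of _ _ _ _ minus] simple_pole) (auto intro!: holomorphic_intros)
    also have "\<dots> = 2 * f z0"
      by simp
    finally show ?thesis .
  qed
qed

lemma has_contour_integral_coth_half_strip_rectpath:
  fixes f :: "complex \<Rightarrow> complex" and \<theta> R :: real
  assumes f: "f holomorphic_on UNIV" and R: "\<bar>\<theta>\<bar> < R"
  shows "((\<lambda>z. f z * coth_half (z - of_real \<theta>)) has_contour_integral 4 * pi * \<i> * f \<theta>)
           (strip_rectpath R)"
proof -
  define S where "S = {z. - 2 * pi < Im z} \<inter> {z. Im z < 2 * pi}"
  define \<psi> where "\<psi> = (\<lambda>z. f z * coth_half (z - of_real \<theta>))"
  let ?\<gamma> = "strip_rectpath R"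
  have S: "open S" "connected S"
    unfolding S_def
    by (auto intro!: open_Int open_Collect_less continuous_intros convex_connected convex_Int
        convex_halfspace_Im_gt convex_halfspace_Im_lt)
  have R0: "R > 0"
    using R by linarith
  have inside: "of_real \<theta> \<in> box (Complex (-R) (-pi)) (Complex R pi)"
    using R by (auto simp: in_box_complex_iff)
  have rectangle_in_S: "cbox (Complex (-R) (-pi)) (Complex R pi) \<subseteq> S"
    by (auto simp: S_def in_cbox_complex_iff; insert pi_gt_zero; linarith)
  have image: "path_image ?\<gamma> \<subseteq> S - {of_real \<theta>}"
    using inside rectangle_in_S by (auto simp: path_image_strip_rectpath[OF R0])
  have "exp (z - of_real \<theta>) \<noteq> 1" if "z \<in> S - {of_real \<theta>}" for z
    using that exp_eq_1_small_Im[of "z - of_real \<theta>"] by (auto simp: S_def abs_less_iff)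
  then have hol: "\<psi> holomorphic_on S - {of_real \<theta>}"
    unfolding \<psi>_def coth_half_def by (auto intro!: holomorphic_intros holomorphic_on_subset[OF f])
  have outside: "\<forall>z. z \<notin> S \<longrightarrow> winding_number ?\<gamma> z = 0"
    unfolding strip_rectpath_def using R0 pi_gt_zero rectangle_in_S
    by (auto intro!: winding_number_rectpath_outside)
  have "contour_integral ?\<gamma> \<psi>
          = 2 * pi * \<i> * (\<Sum>p\<in>{of_real \<theta>}. winding_number ?\<gamma> p * residue \<psi> p)"
    using S hol image outside
    by (intro Residue_theorem) (auto simp: strip_rectpath_def)
  also have "\<dots> = 4 * pi * \<i> * f \<theta>"
    using inside f
    by (simp add: \<psi>_def residue_coth_half holomorphic_on_subset strip_rectpath_def winding_number_rectpath)
  finally have "contour_integral ?\<gamma> \<psi> = 4 * pi * \<i> * f \<theta>" .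
  moreover have "\<psi> contour_integrable_on ?\<gamma>"
    using S hol image
    by (intro contour_integrable_holomorphic_simple[of _ "S - {of_real \<theta>}"]) (auto simp: strip_rectpath_def)
  ultimately show ?thesis
    unfolding \<psi>_def using has_contour_integral_integral by metis
qed

lemma has_contour_integral_coth_half_deriv_strip_rectpath:
  fixes f :: "complex \<Rightarrow> complex" and \<theta> R :: real
  assumes f: "f holomorphic_on UNIV" and R: "\<bar>\<theta>\<bar> < R"
  shows "((\<lambda>z. f z * coth_half_deriv (z - of_real \<theta>))
           has_contour_integral - 4 * pi * \<i> * deriv f \<theta>) (strip_rectpath R)"
proof -
  let ?\<gamma> = "strip_rectpath R"
  \<comment> \<open>Integration by parts: \<open>f * coth_half\<close> is a primitive along the closed path.\<close>
  have "((\<lambda>z. deriv f z * coth_half (z - of_real \<theta>) + f z * coth_half_deriv (z - of_real \<theta>))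
          has_contour_integral 0) ?\<gamma>"
  proof (rule Cauchy_theorem_primitive[where S = "{z. exp (z - of_real \<theta>) \<noteq> 1}"])
    fix z :: complex assume "z \<in> {z. exp (z - of_real \<theta>) \<noteq> 1}"
    then show "((\<lambda>z. f z * coth_half (z - of_real \<theta>)) has_field_derivative
                 deriv f z * coth_half (z - of_real \<theta>) + f z * coth_half_deriv (z - of_real \<theta>))
               (at z within {z. exp (z - of_real \<theta>) \<noteq> 1})"
      using f by (auto intro!: derivative_eq_intros holomorphic_derivI
          has_field_derivative_coth_half[THEN DERIV_chain2])
  qed (use exp_ne_1_on_strip_rectpath[OF R] in \<open>auto simp: strip_rectpath_def\<close>)
  moreover have "((\<lambda>z. deriv f z * coth_half (z - of_real \<theta>))
                   has_contour_integral 4 * pi * \<i> * deriv f \<theta>) ?\<gamma>"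
    using f R by (intro has_contour_integral_coth_half_strip_rectpath holomorphic_deriv) auto
  ultimately show ?thesis
    using has_contour_integral_diff by fastforce
qed

text \<open>The left-hand side is \<open>tanh (u / 2)\<close>, the value of \<open>coth_half\<close> on the horizontal edges.\<close>

lemma sinh_div_cosh_plus_one:
  fixes u :: real
  shows "sinh u / (cosh u + 1) = (exp u - 1) / (exp u + 1)"
proof -
  have "exp u + 1 > 0"
    by (simp add: add_pos_pos)
  moreover have "sinh u = (exp u - 1) * (exp u + 1) / (2 * exp u)"
    and "cosh u + 1 = (exp u + 1)\<^sup>2 / (2 * exp u)"
    by (simp_all add: sinh_def cosh_def exp_minus field_simps power2_eq_square)
  ultimately show ?thesis
    by (simp add: power2_eq_square)
qed

lemma one_div_cosh_plus_one:
  fixes u :: real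
  shows "1 / (cosh u + 1) = 2 * exp u / (exp u + 1)\<^sup>2"
proof -
  have "exp u + 1 > 0"
    by (simp add: add_pos_pos)
  then show ?thesis
    by (simp add: cosh_def exp_minus field_simps power2_eq_square)
qed

lemma sinh_div_cosh_plus_one_odd_part:
  fixes x \<theta> :: real
  shows "sinh (x - \<theta>) / (cosh (x - \<theta>) + 1) - sinh (- x - \<theta>) / (cosh (- x - \<theta>) + 1)
           = 2 * sinh x / (cosh x + cosh \<theta>)"
proof -
  obtain P Q where P: "exp x = P" "P > 0" and Q: "exp \<theta> = Q" "Q > 0"
    by simp
  have pos: "P + Q > 0" "1 + P * Q > 0"
    using P Q by (simp_all add: add_pos_pos)
  have e: "exp (x - \<theta>) = P / Q" "exp (- x - \<theta>) = 1 / (P * Q)"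
    using P Q by (simp_all add: exp_diff exp_minus field_simps)
  have k: "sinh (x - \<theta>) / (cosh (x - \<theta>) + 1) = (P - Q) / (P + Q)"
    "sinh (- x - \<theta>) / (cosh (- x - \<theta>) + 1) = (1 - P * Q) / (1 + P * Q)"
    unfolding sinh_div_cosh_plus_one e using P Q pos by (simp_all add: divide_simps)
  have s: "sinh x = (P * P - 1) / (2 * P)"
    and c: "cosh x + cosh \<theta> = (P + Q) * (1 + P * Q) / (2 * P * Q)"
    using P Q by (simp_all add: sinh_def cosh_def exp_minus field_simps)
  show ?thesis
    unfolding k s c using P Q pos by (simp add: divide_simps) (simp add: algebra_simps)
qed

lemma one_div_cosh_plus_one_odd_part:
  fixes x \<theta> :: real
  shows "1 / (cosh (x - \<theta>) + 1) - 1 / (cosh (- x - \<theta>) + 1)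
           = 2 * sinh \<theta> * sinh x / (cosh x + cosh \<theta>)\<^sup>2"
proof -
  obtain P Q where P: "exp x = P" "P > 0" and Q: "exp \<theta> = Q" "Q > 0"
    by simp
  have pos: "P + Q > 0" "1 + P * Q > 0"
    using P Q by (simp_all add: add_pos_pos)
  have e: "exp (x - \<theta>) = P / Q" "exp (- x - \<theta>) = 1 / (P * Q)"
    using P Q by (simp_all add: exp_diff exp_minus field_simps)
  have s: "sinh x = (P * P - 1) / (2 * P)" "sinh \<theta> = (Q * Q - 1) / (2 * Q)"
    and c: "cosh x + cosh \<theta> = (P + Q) * (1 + P * Q) / (2 * P * Q)"
    using P Q by (simp_all add: sinh_def cosh_def exp_minus field_simps)
  show ?thesis
    unfolding one_div_cosh_plus_one e s c using P Q pos
    by (simp add: divide_simps power2_eq_square) (simp add: algebra_simps)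
qed

lemma exp_Complex_minus_of_real:
  "exp (Complex x y - of_real \<theta>) = of_real (exp (x - \<theta>)) * cis y"
proof -
  have "Complex x y - of_real \<theta> = of_real (x - \<theta>) + \<i> * of_real y"
    by (simp add: complex_eq_iff)
  then show ?thesis
    by (simp only: exp_add exp_of_real cis_conv_exp)
qed

lemma exp_Complex_strip_edge:
  assumes "\<bar>y\<bar> = pi"
  shows "exp (Complex x y - of_real \<theta>) = - of_real (exp (x - \<theta>))"
proof -
  from assms have "y = pi \<or> y = - pi"
    by (cases "y \<ge> 0") auto
  then show ?thesis
    by (auto simp: exp_Complex_minus_of_real complex_eq_iff)
qed

lemma coth_half_strip_edge:
  assumes "\<bar>y\<bar> = pi"
  shows "coth_half (Complex x y - of_real \<theta>) = of_real (sinh (x - \<theta>) / (cosh (x - \<theta>) + 1))"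
proof -
  have "coth_half (Complex x y - of_real \<theta>)
          = - (of_real (exp (x - \<theta>)) - 1) / - (of_real (exp (x - \<theta>)) + 1)"
    unfolding coth_half_def exp_Complex_strip_edge[OF assms] by (simp add: algebra_simps)
  also have "\<dots> = of_real ((exp (x - \<theta>) - 1) / (exp (x - \<theta>) + 1))"
    by (simp only: minus_divide_divide) simp
  finally show ?thesis
    unfolding sinh_div_cosh_plus_one .
qed

lemma coth_half_deriv_strip_edge:
  assumes "\<bar>y\<bar> = pi"
  shows "coth_half_deriv (Complex x y - of_real \<theta>) = of_real (1 / (cosh (x - \<theta>) + 1))"
proof -
  have "(- of_real (exp (x - \<theta>)) - 1 :: complex)\<^sup>2 = (of_real (exp (x - \<theta>)) + 1)\<^sup>2"
    by (simp add: power2_eq_square algebra_simps)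
  then show ?thesis
    unfolding coth_half_deriv_def one_div_cosh_plus_one exp_Complex_strip_edge[OF assms] by simp
qed

lemma exp_gaussian_Complex:
  "exp (- (Complex x y)\<^sup>2 / (2 * of_real t)) = of_real (exp ((y\<^sup>2 - x\<^sup>2) / (2 * t))) * cis (- (x * y) / t)"
proof -
  have "- (Complex x y)\<^sup>2 / (2 * of_real t) = of_real ((y\<^sup>2 - x\<^sup>2) / (2 * t)) + \<i> * of_real (- (x * y) / t)"
    by (cases "t = 0") (simp_all add: complex_eq_iff power2_eq_square field_simps Complex_eq)
  then show ?thesis
    by (simp only: exp_add exp_of_real cis_conv_exp)
qed

lemma exp_gaussian_strip_edges_diff:
  "exp (- (Complex x (- pi))\<^sup>2 / (2 * of_real t)) - exp (- (Complex x pi)\<^sup>2 / (2 * of_real t))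
     = 2 * \<i> * of_real (exp ((pi\<^sup>2 - x\<^sup>2) / (2 * t)) * sin (pi * x / t))"
  unfolding exp_gaussian_Complex by (simp add: complex_eq_iff algebra_simps)

lemma norm_exp_gaussian_strip:
  assumes "t > 0" and "\<bar>y\<bar> \<le> pi"
  shows "norm (exp (- (Complex x y)\<^sup>2 / (2 * of_real t))) \<le> exp ((pi\<^sup>2 - x\<^sup>2) / (2 * t))"
proof -
  have "y\<^sup>2 \<le> pi\<^sup>2"
    using assms(2) by (simp add: abs_le_square_iff[symmetric])
  with assms(1) show ?thesis
    unfolding exp_gaussian_Complex by (simp add: norm_mult divide_right_mono)
qed

lemma exp_strip_weight_le:
  fixes t x :: real
  assumes "t > 0"
  shows "exp ((pi\<^sup>2 - x\<^sup>2) / (2 * t)) \<le> exp (pi\<^sup>2 / (2 * t) + t / 2) * exp (- \<bar>x\<bar>)"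
proof -
  have "2 * t * \<bar>x\<bar> \<le> x\<^sup>2 + t\<^sup>2"
    using sum_squares_ge_zero[of "\<bar>x\<bar> - t" 0] by (simp add: power2_eq_square algebra_simps)
  moreover have "(pi\<^sup>2 / (2 * t) + t / 2 - \<bar>x\<bar>) * (2 * t) = pi\<^sup>2 + t\<^sup>2 - 2 * t * \<bar>x\<bar>"
    using assms by (simp add: field_simps power2_eq_square)
  ultimately have "(pi\<^sup>2 - x\<^sup>2) / (2 * t) \<le> pi\<^sup>2 / (2 * t) + t / 2 - \<bar>x\<bar>"
    using assms by (simp add: pos_divide_le_eq)
  then show ?thesis
    by (simp flip: exp_add)
qed

lemma norm_exp_minus_one_ge:
  fixes w :: complex
  assumes "\<bar>Re w\<bar> \<ge> 1"
  shows "max 1 (norm (exp w)) \<le> 2 * norm (exp w - 1)"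
proof -
  have e: "exp (1::real) \<ge> 2"
    using exp_ge_add_one_self[of 1] by simp
  have "\<bar>exp (Re w) - 1\<bar> \<le> norm (exp w - 1)"
    using norm_triangle_ineq3[of "exp w" 1] by simp
  moreover consider "Re w \<ge> 1" | "Re w \<le> -1"
    using assms by linarith
  then have "max 1 (exp (Re w)) \<le> 2 * \<bar>exp (Re w) - 1\<bar>"
  proof cases
    case 1
    then have "exp (Re w) \<ge> 2"
      using e by (meson exp_le_cancel_iff order_trans)
    with 1 show ?thesis by (simp add: abs_if)
  next
    case 2
    then have "exp (Re w) \<le> exp (-1)"
      by simp
    also have "\<dots> \<le> 1 / 2"
      using e by (simp add: exp_minus divide_simps)
    finally have "exp (Re w) \<le> 1 / 2" .
    with 2 show ?thesis by (simp add: abs_if)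
  qed
  ultimately show ?thesis
    by simp
qed

lemma norm_coth_half_le:
  assumes "\<bar>Re w\<bar> \<ge> 1"
  shows "norm (coth_half w) \<le> 4"
proof -
  have "norm (exp w + 1) \<le> 2 * max 1 (norm (exp w))"
    using norm_triangle_ineq[of "exp w" 1] by simp
  also have "\<dots> \<le> 4 * norm (exp w - 1)"
    using norm_exp_minus_one_ge[OF assms] by simp
  finally show ?thesis
    unfolding coth_half_def norm_divide by (simp add: divide_le_eq)
qed

lemma norm_coth_half_deriv_le:
  assumes "\<bar>Re w\<bar> \<ge> 1"
  shows "norm (coth_half_deriv w) \<le> 8"
proof -
  define m d where "m = max 1 (norm (exp w))" and "d = norm (exp w - 1)"
  have m: "m \<ge> 1" "norm (exp w) \<le> m" and md: "m \<le> 2 * d"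
    using norm_exp_minus_one_ge[OF assms] by (simp_all add: m_def d_def)
  have "2 * norm (exp w) \<le> 2 * m * m"
    using m by (simp add: mult_mono)
  also have "\<dots> \<le> 2 * (2 * d) * (2 * d)"
    using m md by (intro mult_mono) auto
  finally have "norm (2 * exp w) \<le> 8 * d\<^sup>2"
    by (simp add: power2_eq_square norm_mult)
  moreover have "d > 0"
    using m md by linarith
  ultimately show ?thesis
    unfolding coth_half_deriv_def norm_divide norm_power norm_minus_cancel d_def[symmetric]
    by (simp add: divide_le_eq)
qed

section \<open>From contour integrals to integrals over [0, \<infinity>)\<close>

lemma has_contour_integral_horizontal_linepath_iff:
  fixes f :: "complex \<Rightarrow> complex"
  assumes "a < b"
  shows "(f has_contour_integral I) (linepath (Complex a c) (Complex b c)) \<longleftrightarrow>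
           ((\<lambda>x. f (Complex x c)) has_integral I) {a..b}"
proof -
  have "(f has_contour_integral I) (linepath (Complex a c) (Complex b c)) \<longleftrightarrow>
          ((\<lambda>w. f (w + \<i> * of_real c)) has_contour_integral I) (linepath (of_real a) (of_real b))"
    unfolding has_contour_integral_linepath
    by (intro has_integral_cong arg_cong2[of _ _ _ _ "(*)"] arg_cong[of _ _ f])
       (auto simp: linepath_def complex_eq_iff algebra_simps)
  also have "\<dots> \<longleftrightarrow> ((\<lambda>x. f (Complex x c)) has_integral I) {a..b}"
    using assms by (subst has_contour_integral_linepath_Reals_iff) (auto simp: Complex_eq)
  finally show ?thesis .
qed

lemma norm_has_contour_integral_vertical_linepath_le:
  fixes \<psi> :: "complex \<Rightarrow> complex"
  assumes I: "(\<psi> has_contour_integral I) (linepath (Complex X y1) (Complex X y2))"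
    and y: "{y1, y2} = {-pi, pi}"
    and bound: "\<And>y. \<bar>y\<bar> \<le> pi \<Longrightarrow> norm (\<psi> (Complex X y)) \<le> B"
  shows "norm I \<le> 2 * pi * B"
proof -
  have B: "B \<ge> 0"
    using bound[of 0] by (simp; meson norm_ge_zero order_trans)
  have "norm I \<le> B * norm (Complex X y2 - Complex X y1)"
  proof (rule has_contour_integral_bound_linepath[OF I B])
    fix z assume "z \<in> closed_segment (Complex X y1) (Complex X y2)"
    then have "Re z = X" "Im z \<in> closed_segment (-pi) pi"
      using y by (auto simp: closed_segment_same_Re doubleton_eq_iff closed_segment_commute)
    then have "z = Complex X (Im z)" "\<bar>Im z\<bar> \<le> pi"
      by (auto simp: complex_eq_iff closed_segment_eq_real_ivl abs_le_iff)
    then show "norm (\<psi> z) \<le> B"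
      using bound by metis
  qed
  also have "norm (Complex X y2 - Complex X y1) = 2 * pi"
    using y by (auto simp: doubleton_eq_iff cmod_def)
  finally show ?thesis
    by (simp add: mult.commute)
qed

lemma has_integral_strip_rectpath_horizontal_sides:
  fixes \<psi> :: "complex \<Rightarrow> complex"
  assumes R: "R > 0"
    and cont: "continuous_on (path_image (strip_rectpath R)) \<psi>"
    and contour: "(\<psi> has_contour_integral C) (strip_rectpath R)"
    and sides: "\<And>y. \<bar>y\<bar> \<le> pi \<Longrightarrow> norm (\<psi> (Complex R y)) \<le> B \<and> norm (\<psi> (Complex (-R) y)) \<le> B"
  obtains V where "norm V \<le> 4 * pi * B"
    and "((\<lambda>x. \<psi> (Complex x (-pi)) - \<psi> (Complex x pi)) has_integral C - V) {-R..R}"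
proof -
  define a1 a2 a3 a4 where "a1 = Complex (-R) (-pi)" and "a2 = Complex R (-pi)"
    and "a3 = Complex R pi" and "a4 = Complex (-R) pi"
  have \<gamma>: "strip_rectpath R = linepath a1 a2 +++ linepath a2 a3 +++ linepath a3 a4 +++ linepath a4 a1"
    by (simp add: strip_rectpath_def rectpath_def a1_def a2_def a3_def a4_def Let_def)
  have "continuous_on (closed_segment a1 a2) \<psi>" "continuous_on (closed_segment a2 a3) \<psi>"
    "continuous_on (closed_segment a3 a4) \<psi>" "continuous_on (closed_segment a4 a1) \<psi>"
    using cont unfolding \<gamma> by (auto simp: path_image_join elim: continuous_on_subset)
  then obtain I1 I2 I3 I4 where I1: "(\<psi> has_contour_integral I1) (linepath a1 a2)"
    and I2: "(\<psi> has_contour_integral I2) (linepath a2 a3)"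
    and I3: "(\<psi> has_contour_integral I3) (linepath a3 a4)"
    and I4: "(\<psi> has_contour_integral I4) (linepath a4 a1)"
    using contour_integrable_continuous_linepath unfolding contour_integrable_on_def by metis
  have "(\<psi> has_contour_integral (I1 + (I2 + (I3 + I4)))) (strip_rectpath R)"
    unfolding \<gamma> by (intro has_contour_integral_join I1 I2 I3 I4 valid_path_join valid_path_linepath) auto
  with contour have C: "C = I1 + I2 + I3 + I4"
    using has_contour_integral_unique by (metis add.assoc)
  have "norm I2 \<le> 2 * pi * B" "norm I4 \<le> 2 * pi * B"
    using sides
    by (auto intro!: norm_has_contour_integral_vertical_linepath_le I2[unfolded a2_def a3_def]
        I4[unfolded a4_def a1_def] simp: insert_commute)
  then have vertical: "norm (I2 + I4) \<le> 4 * pi * B"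
    using norm_triangle_ineq[of I2 I4] by linarith
  have "((\<lambda>x. \<psi> (Complex x (-pi))) has_integral I1) {-R..R}"
    using I1 R by (simp add: a1_def a2_def has_contour_integral_horizontal_linepath_iff)
  moreover have "((\<lambda>x. \<psi> (Complex x pi)) has_integral - I3) {-R..R}"
    using has_contour_integral_reverse_linepath[OF I3] R
    by (simp add: a3_def a4_def has_contour_integral_horizontal_linepath_iff)
  ultimately have "((\<lambda>x. \<psi> (Complex x (-pi)) - \<psi> (Complex x pi)) has_integral I1 - - I3) {-R..R}"
    by (rule has_integral_diff)
  moreover have "I1 - - I3 = C - (I2 + I4)"
    by (simp add: C)
  ultimately show ?thesis
    using that vertical by metis
qed

lemma has_integral_symmetric_interval:
  fixes a :: "real \<Rightarrow> real"
  assumes a: "(a has_integral J) {-R..R}" and R: "R \<ge> 0"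
  shows "((\<lambda>x. a x + a (-x)) has_integral J) {0..R}"
proof -
  have "a integrable_on {-R..0}" "a integrable_on {0..R}"
    using a R by (auto intro: integrable_subinterval_real)
  then have "(a has_integral integral {-R..0} a) {-R..0}" "(a has_integral integral {0..R} a) {0..R}"
    by (auto simp: has_integral_integral)
  moreover from this(1) have "((\<lambda>x. a (-x)) has_integral integral {-R..0} a) {0..R}"
    using has_integral_reflect_real[where f = a and a = "-R" and b = 0] by simp
  ultimately have "((\<lambda>x. a x + a (-x)) has_integral integral {0..R} a + integral {-R..0} a) {0..R}"
    and "(a has_integral integral {-R..0} a + integral {0..R} a) {-R..R}"
    using R by (auto intro: has_integral_add has_integral_combine[where c = 0])
  with a show ?thesis
    by (metis add.commute has_integral_unique)
qed

lemma integrable_on_Ici_exp_bound: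
  fixes h :: "real \<Rightarrow> real"
  assumes cont: "continuous_on {0..} h" and bound: "\<And>x. x \<ge> 0 \<Longrightarrow> \<bar>h x\<bar> \<le> K * exp (- x)"
  shows "h integrable_on {0..}"
proof -
  have "((\<lambda>x. K * exp (- x)) has_integral K) {0..}"
    using has_integral_mult_right[OF has_integral_exp_minus_to_infinity[of 1 0], of K] by simp
  then have "(\<lambda>x. K * exp (- x)) integrable_on {0..}"
    by blast
  moreover have "{0::real..} \<in> sets lebesgue"
    by simp
  ultimately show ?thesis
    using bound measurable_bounded_by_integrable_imp_integrable
      continuous_imp_measurable_on_sets_lebesgue[OF cont] by (metis atLeast_iff real_norm_def)
qed

lemma has_integral_Ici_exp_bound:
  fixes h :: "real \<Rightarrow> real"
  assumes cont: "continuous_on {0..} h" and bound: "\<And>x. x \<ge> 0 \<Longrightarrow> \<bar>h x\<bar> \<le> K * exp (- x)"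
    and lim: "((\<lambda>R. integral {0..R} h) \<longlongrightarrow> L) at_top"
  shows "(h has_integral L) {0..}"
proof -
  \<comment> \<open>\<open>has_integral_to_inf\<close> needs a nonnegative integrand, so shift \<open>h\<close> by its majorant \<open>g\<close>.\<close>
  define g where "g = (\<lambda>x::real. K * exp (- x))"
  have g: "(g has_integral K) {0..}"
    using has_integral_mult_right[OF has_integral_exp_minus_to_infinity[of 1 0], of K] by (simp add: g_def)
  have g_partial: "integral {0..R} g = K - K * exp (- R)" if "R \<ge> 0" for R
  proof -
    have "(g has_integral (- K * exp (- R)) - (- K * exp (- 0))) {0..R}"
      using that unfolding g_def
      by (intro fundamental_theorem_of_calculus)
         (auto intro!: derivative_eq_intros simp flip: has_real_derivative_iff_has_vector_derivative)
    then show ?thesis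
      by (simp add: integral_unique)
  qed
  have "((\<lambda>R. K - K * exp (- R)) \<longlongrightarrow> K) at_top"
    by real_asymp
  moreover have "\<forall>\<^sub>F R in at_top. K - K * exp (- R) = integral {0..R} g"
    using eventually_ge_at_top[of 0] by eventually_elim (simp add: g_partial)
  ultimately have g_lim: "((\<lambda>R. integral {0..R} g) \<longlongrightarrow> K) at_top"
    by (rule Lim_transform_eventually)
  have h_int: "h integrable_on {0..R}" for R
    by (rule integrable_continuous_interval, rule continuous_on_subset[OF cont]) auto
  have g_int: "g integrable_on {0..R}" for R
    unfolding g_def by (intro integrable_continuous_interval continuous_intros)
  have "((\<lambda>x. h x + g x) has_integral L + K) {0..}"
  proof (rule has_integral_to_inf)
    show "(\<lambda>x. h x + g x) integrable_on {0..R}" for R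
      by (intro integrable_add h_int g_int)
    show "((\<lambda>R. integral {0..R} (\<lambda>x. h x + g x)) \<longlongrightarrow> L + K) at_top"
      using tendsto_add[OF lim g_lim] by (simp add: integral_add h_int g_int)
    show "h x + g x \<ge> 0" if "x \<ge> 0" for x
      using bound[OF that] by (simp add: g_def)
  qed
  from has_integral_diff[OF this g] show ?thesis
    by simp
qed

lemma has_integral_Ici_of_strip_rectpaths:
  fixes \<psi> :: "complex \<Rightarrow> complex" and a B :: "real \<Rightarrow> real"
  assumes contour: "\<And>R. R \<ge> R\<^sub>0 \<Longrightarrow> (\<psi> has_contour_integral C) (strip_rectpath R)"
    and cont: "\<And>R. R \<ge> R\<^sub>0 \<Longrightarrow> continuous_on (path_image (strip_rectpath R)) \<psi>"
    and sides: "\<And>R y. R \<ge> R\<^sub>0 \<Longrightarrow> \<bar>y\<bar> \<le> pi \<Longrightarrow>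
                  norm (\<psi> (Complex R y)) \<le> B R \<and> norm (\<psi> (Complex (-R) y)) \<le> B R"
    and B: "(B \<longlongrightarrow> 0) at_top"
    and edges: "\<And>x. \<psi> (Complex x (-pi)) - \<psi> (Complex x pi) = 2 * \<i> * of_real (a x)"
    and a_cont: "continuous_on UNIV a" and a_bound: "\<And>x. \<bar>a x\<bar> \<le> K * exp (- \<bar>x\<bar>)"
  shows "((\<lambda>x. a x + a (-x)) has_integral Im C / 2) {0..}"
proof -
  have estimate: "\<bar>integral {0..R} (\<lambda>x. a x + a (-x)) - Im C / 2\<bar> \<le> 2 * pi * B R"
    if R: "R \<ge> max R\<^sub>0 1" for R
  proof -
    obtain V where V: "norm V \<le> 4 * pi * B R"
      and horizontal: "((\<lambda>x. 2 * \<i> * of_real (a x)) has_integral C - V) {-R..R}"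
      using has_integral_strip_rectpath_horizontal_sides[of R \<psi> C "B R"] R contour cont sides
      unfolding edges by auto
    have "(a has_integral integral {-R..R} a) {-R..R}"
      by (intro integrable_integral integrable_continuous_interval continuous_on_subset[OF a_cont])
         simp
    then have "((\<lambda>x. 2 * \<i> * of_real (a x)) has_integral 2 * \<i> * of_real (integral {-R..R} a)) {-R..R}"
      by (intro has_integral_mult_right has_integral_of_real)
    from this horizontal have "2 * \<i> * of_real (integral {-R..R} a) = C - V"
      by (rule has_integral_unique)
    then have "integral {-R..R} a = (Im C - Im V) / 2"
      by (simp add: complex_eq_iff)
    moreover have "integral {0..R} (\<lambda>x. a x + a (-x)) = integral {-R..R} a"
      using R \<open>(a has_integral integral {-R..R} a) {-R..R}\<close>
      by (intro integral_unique has_integral_symmetric_interval) auto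
    moreover have "\<bar>Im V\<bar> \<le> 4 * pi * B R"
      using V abs_Im_le_cmod[of V] by linarith
    ultimately show ?thesis
      by simp
  qed
  have "((\<lambda>R. integral {0..R} (\<lambda>x. a x + a (-x)) - Im C / 2) \<longlongrightarrow> 0) at_top"
  proof (rule Lim_null_comparison)
    show "\<forall>\<^sub>F R in at_top. norm (integral {0..R} (\<lambda>x. a x + a (-x)) - Im C / 2) \<le> 2 * pi * B R"
      using eventually_ge_at_top[of "max R\<^sub>0 1"] by eventually_elim (use estimate in auto)
    show "((\<lambda>R. 2 * pi * B R) \<longlongrightarrow> 0) at_top"
      using tendsto_mult_right_zero[OF B] by simp
  qed
  then have "((\<lambda>R. integral {0..R} (\<lambda>x. a x + a (-x))) \<longlongrightarrow> Im C / 2) at_top"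
    by (rule LIM_zero_cancel)
  moreover have "continuous_on {0..} (\<lambda>x. a x + a (-x))"
    by (intro continuous_on_add continuous_on_subset[OF a_cont]
        continuous_on_compose2[OF a_cont continuous_on_minus[OF continuous_on_id]]) auto
  moreover have "\<bar>a x + a (-x)\<bar> \<le> 2 * K * exp (- x)" if "x \<ge> 0" for x
    using that a_bound[of x] a_bound[of "-x"] by simp
  ultimately show ?thesis
    by (intro has_integral_Ici_exp_bound) auto
qed

lemma has_integral_Ici_gaussian_strip:
  fixes t \<theta> M :: real and \<kappa> :: "complex \<Rightarrow> complex" and k :: "real \<Rightarrow> real"
  assumes t: "t > 0"
    and \<kappa>_cont: "continuous_on {w. exp w \<noteq> 1} \<kappa>"
    and contour: "\<And>R. \<bar>\<theta>\<bar> < R \<Longrightarrow>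
      ((\<lambda>z. exp (- z\<^sup>2 / (2 * of_real t)) * \<kappa> (z - of_real \<theta>)) has_contour_integral C) (strip_rectpath R)"
    and \<kappa>_bound: "\<And>w. \<bar>Re w\<bar> \<ge> 1 \<Longrightarrow> norm (\<kappa> w) \<le> M"
    and \<kappa>_edge: "\<And>x y. \<bar>y\<bar> = pi \<Longrightarrow> \<kappa> (Complex x y - of_real \<theta>) = of_real (k x)"
    and k_cont: "continuous_on UNIV k" and k_bound: "\<And>x. \<bar>k x\<bar> \<le> 1"
  shows "((\<lambda>x. exp ((pi\<^sup>2 - x\<^sup>2) / (2 * t)) * sin (pi * x / t) * (k x - k (- x)))
           has_integral Im C / 2) {0..}"
proof -
  define E where "E x = exp ((pi\<^sup>2 - x\<^sup>2) / (2 * t))" for x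
  define a where "a x = E x * sin (pi * x / t) * k x" for x
  let ?\<psi> = "\<lambda>z. exp (- z\<^sup>2 / (2 * of_real t)) * \<kappa> (z - of_real \<theta>)"
  have "((\<lambda>x. a x + a (-x)) has_integral Im C / 2) {0..}"
  proof (rule has_integral_Ici_of_strip_rectpaths[where R\<^sub>0 = "\<bar>\<theta>\<bar> + 1" and B = "\<lambda>R. M * E R"
        and K = "exp (pi\<^sup>2 / (2 * t) + t / 2)"])
    show "(?\<psi> has_contour_integral C) (strip_rectpath R)" if "R \<ge> \<bar>\<theta>\<bar> + 1" for R
      using that by (intro contour) auto
    show "continuous_on (path_image (strip_rectpath R)) ?\<psi>" if "R \<ge> \<bar>\<theta>\<bar> + 1" for R
      using that t exp_ne_1_on_strip_rectpath[of \<theta> R]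
      by (intro continuous_intros continuous_on_compose2[OF \<kappa>_cont]) auto
    show "norm (?\<psi> (Complex R y)) \<le> M * E R \<and> norm (?\<psi> (Complex (-R) y)) \<le> M * E R"
      if "R \<ge> \<bar>\<theta>\<bar> + 1" "\<bar>y\<bar> \<le> pi" for R y
    proof -
      have "norm (?\<psi> (Complex X y)) \<le> E R * M" if "X = R \<or> X = -R" for X
        unfolding norm_mult
      proof (rule mult_mono)
        show "norm (exp (- (Complex X y)\<^sup>2 / (2 * of_real t))) \<le> E R"
          using norm_exp_gaussian_strip[OF t \<open>\<bar>y\<bar> \<le> pi\<close>, of X] that by (auto simp: E_def)
        show "norm (\<kappa> (Complex X y - of_real \<theta>)) \<le> M"
          using \<open>R \<ge> \<bar>\<theta>\<bar> + 1\<close> that by (intro \<kappa>_bound) auto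
      qed (auto simp: E_def)
      then show ?thesis
        by (simp add: mult.commute)
    qed
    have "(E \<longlongrightarrow> 0) at_top"
      unfolding E_def using t by real_asymp
    then show "((\<lambda>R. M * E R) \<longlongrightarrow> 0) at_top"
      by (rule tendsto_mult_right_zero)
    show "?\<psi> (Complex x (-pi)) - ?\<psi> (Complex x pi) = 2 * \<i> * of_real (a x)" for x
      using exp_gaussian_strip_edges_diff[of x t]
      by (simp add: \<kappa>_edge a_def E_def left_diff_distrib[symmetric])
    show "continuous_on UNIV a"
      unfolding a_def E_def using t by (intro continuous_intros k_cont) auto
    show "\<bar>a x\<bar> \<le> exp (pi\<^sup>2 / (2 * t) + t / 2) * exp (- \<bar>x\<bar>)" for x
    proof -
      have "\<bar>sin (pi * x / t) * k x\<bar> \<le> 1"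
        using abs_sin_le_one k_bound by (simp add: abs_mult mult_le_one)
      then have "\<bar>a x\<bar> \<le> E x"
        by (simp add: a_def E_def abs_mult mult_left_le mult.assoc)
      then show ?thesis
        using exp_strip_weight_le[OF t, of x] by (simp add: E_def)
    qed
  qed
  moreover have "a x + a (-x) = E x * sin (pi * x / t) * (k x - k (- x))" for x
    by (simp add: a_def E_def algebra_simps)
  ultimately show ?thesis
    by (simp add: E_def)
qed

lemma abs_sinh_le_cosh: "\<bar>sinh u\<bar> \<le> cosh (u :: real)"
  using sinh_le_cosh_real[of u] sinh_le_cosh_real[of "- u"] by (simp add: abs_le_iff)

lemma holomorphic_exp_gaussian: "(\<lambda>z. exp (- z\<^sup>2 / (2 * of_real t))) holomorphic_on S"
  by (cases "t = 0") (auto intro!: holomorphic_intros)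

lemma exp_gaussian_of_real:
  "exp (- (complex_of_real \<theta>)\<^sup>2 / (2 * of_real t)) = of_real (exp (- \<theta>\<^sup>2 / (2 * t)))"
  by (simp flip: exp_of_real)

theorem has_integral_sinh_sin_div_cosh_add_cosh:
  fixes t \<theta> :: real
  assumes t: "t > 0"
  shows "((\<lambda>\<rho>. exp ((pi\<^sup>2 - \<rho>\<^sup>2) / (2 * t)) * sinh \<rho> * sin (pi * \<rho> / t) / (cosh \<rho> + cosh \<theta>))
           has_integral pi * exp (- \<theta>\<^sup>2 / (2 * t))) {0..}"
proof -
  define k where "k x = sinh (x - \<theta>) / (cosh (x - \<theta>) + 1)" for x
  have cosh_pos: "cosh u + 1 > 0" for u :: real
    by (simp add: add_pos_pos)
  have "((\<lambda>x. exp ((pi\<^sup>2 - x\<^sup>2) / (2 * t)) * sin (pi * x / t) * (k x - k (- x)))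
          has_integral Im (4 * pi * \<i> * exp (- (of_real \<theta>)\<^sup>2 / (2 * of_real t))) / 2) {0..}"
  proof (rule has_integral_Ici_gaussian_strip[OF t, where \<kappa> = coth_half and M = 4])
    show "continuous_on {w. exp w \<noteq> 1} coth_half"
      unfolding coth_half_def by (intro continuous_intros) auto
    show "continuous_on UNIV k"
      unfolding k_def using cosh_pos by (intro continuous_intros) (metis less_irrefl)
    show "\<bar>k x\<bar> \<le> 1" for x
      using abs_sinh_le_cosh[of "x - \<theta>"] cosh_pos[of "x - \<theta>"] by (simp add: k_def abs_divide)
    show "((\<lambda>z. exp (- z\<^sup>2 / (2 * of_real t)) * coth_half (z - of_real \<theta>)) has_contour_integral
            4 * pi * \<i> * exp (- (of_real \<theta>)\<^sup>2 / (2 * of_real t))) (strip_rectpath R)"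
      if "\<bar>\<theta>\<bar> < R" for R
      by (rule has_contour_integral_coth_half_strip_rectpath[OF holomorphic_exp_gaussian that])
  qed (simp_all add: k_def coth_half_strip_edge norm_coth_half_le)
  moreover have "k x - k (- x) = 2 * sinh x / (cosh x + cosh \<theta>)" for x
    using sinh_div_cosh_plus_one_odd_part[of x \<theta>] by (simp add: k_def)
  ultimately have "((\<lambda>\<rho>. 2 * (exp ((pi\<^sup>2 - \<rho>\<^sup>2) / (2 * t)) * sinh \<rho> * sin (pi * \<rho> / t) / (cosh \<rho> + cosh \<theta>)))
                     has_integral 2 * (pi * exp (- \<theta>\<^sup>2 / (2 * t)))) {0..}"
    unfolding exp_gaussian_of_real by (simp add: algebra_simps)
  from has_integral_mult_right[OF this, of "1 / 2"] show ?thesis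
    by simp
qed

lemma deriv_exp_gaussian:
  assumes "t \<noteq> 0"
  shows "deriv (\<lambda>z. exp (- z\<^sup>2 / (2 * of_real t))) z = - (z / of_real t) * exp (- z\<^sup>2 / (2 * of_real t))"
  using assms by (intro DERIV_imp_deriv) (auto intro!: derivative_eq_intros simp: field_simps power2_eq_square)

theorem has_integral_sinh_sin_div_cosh_add_cosh_sq:
  fixes t \<theta> :: real
  assumes t: "t > 0"
  shows "((\<lambda>\<rho>. sinh \<theta> * (exp ((pi\<^sup>2 - \<rho>\<^sup>2) / (2 * t)) * sinh \<rho> * sin (pi * \<rho> / t) / (cosh \<rho> + cosh \<theta>)\<^sup>2))
           has_integral pi * \<theta> / t * exp (- \<theta>\<^sup>2 / (2 * t))) {0..}"
proof -
  define k where "k x = 1 / (cosh (x - \<theta>) + 1)" for x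
  have cosh_pos: "cosh u + 1 > 0" for u :: real
    by (simp add: add_pos_pos)
  have "((\<lambda>x. exp ((pi\<^sup>2 - x\<^sup>2) / (2 * t)) * sin (pi * x / t) * (k x - k (- x)))
          has_integral Im (- 4 * pi * \<i> * deriv (\<lambda>z. exp (- z\<^sup>2 / (2 * of_real t))) (of_real \<theta>)) / 2) {0..}"
  proof (rule has_integral_Ici_gaussian_strip[OF t, where \<kappa> = coth_half_deriv and M = 8])
    show "continuous_on {w. exp w \<noteq> 1} coth_half_deriv"
      unfolding coth_half_deriv_def by (intro continuous_intros) auto
    show "continuous_on UNIV k"
      unfolding k_def using cosh_pos by (intro continuous_intros) (metis less_irrefl)
    show "\<bar>k x\<bar> \<le> 1" for x
      using cosh_real_ge_1[of "x - \<theta>"] by (simp add: k_def)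
    show "((\<lambda>z. exp (- z\<^sup>2 / (2 * of_real t)) * coth_half_deriv (z - of_real \<theta>)) has_contour_integral
            - 4 * pi * \<i> * deriv (\<lambda>z. exp (- z\<^sup>2 / (2 * of_real t))) (of_real \<theta>)) (strip_rectpath R)"
      if "\<bar>\<theta>\<bar> < R" for R
      by (rule has_contour_integral_coth_half_deriv_strip_rectpath[OF holomorphic_exp_gaussian that])
  qed (simp_all add: k_def coth_half_deriv_strip_edge norm_coth_half_deriv_le)
  moreover have "k x - k (- x) = 2 * sinh \<theta> * sinh x / (cosh x + cosh \<theta>)\<^sup>2" for x
    using one_div_cosh_plus_one_odd_part[of x \<theta>] by (simp add: k_def)
  ultimately have "((\<lambda>\<rho>. 2 * (sinh \<theta> * (exp ((pi\<^sup>2 - \<rho>\<^sup>2) / (2 * t)) * sinh \<rho> * sin (pi * \<rho> / t)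
                        / (cosh \<rho> + cosh \<theta>)\<^sup>2)))
                     has_integral 2 * (pi * \<theta> / t * exp (- \<theta>\<^sup>2 / (2 * t)))) {0..}"
    using t unfolding deriv_exp_gaussian[OF less_imp_neq[OF t, symmetric]] exp_gaussian_of_real
    by (simp add: algebra_simps)
  from has_integral_mult_right[OF this, of "1 / 2"] show ?thesis
    by simp
qed

lemma integrable_sinh_sin_div_cosh_add_cosh_sq:
  fixes t \<theta> :: real
  assumes t: "t > 0"
  shows "(\<lambda>\<rho>. exp ((pi\<^sup>2 - \<rho>\<^sup>2) / (2 * t)) * sinh \<rho> * sin (pi * \<rho> / t) / (cosh \<rho> + cosh \<theta>)\<^sup>2)
           integrable_on {0..}"
proof (rule integrable_on_Ici_exp_bound[where K = "exp (pi\<^sup>2 / (2 * t) + t / 2)"])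
  have c: "cosh \<rho> + cosh \<theta> \<ge> 1" for \<rho>
    using cosh_real_ge_1[of \<rho>] cosh_real_pos[of \<theta>] by linarith
  then have "(cosh \<rho> + cosh \<theta>)\<^sup>2 \<noteq> 0" for \<rho>
    by (metis not_one_le_zero zero_eq_power2)
  then show "continuous_on {0..} (\<lambda>\<rho>. exp ((pi\<^sup>2 - \<rho>\<^sup>2) / (2 * t)) * sinh \<rho> * sin (pi * \<rho> / t)
                                     / (cosh \<rho> + cosh \<theta>)\<^sup>2)"
    using t by (intro continuous_intros) auto
  fix \<rho> :: real
  assume "\<rho> \<ge> 0"
  have "\<bar>sinh \<rho> * sin (pi * \<rho> / t)\<bar> \<le> \<bar>sinh \<rho>\<bar>"
    using abs_sin_le_one[of "pi * \<rho> / t"] by (simp add: abs_mult mult_left_le)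
  also have "\<dots> \<le> cosh \<rho> + cosh \<theta>"
    using abs_sinh_le_cosh[of \<rho>] cosh_real_pos[of \<theta>] by linarith
  also have "\<dots> \<le> (cosh \<rho> + cosh \<theta>)\<^sup>2"
    using c[of \<rho>] by (simp add: power2_eq_square)
  finally have "\<bar>sinh \<rho> * sin (pi * \<rho> / t) / (cosh \<rho> + cosh \<theta>)\<^sup>2\<bar> \<le> 1"
    using c[of \<rho>] by (simp add: abs_divide)
  then have "\<bar>exp ((pi\<^sup>2 - \<rho>\<^sup>2) / (2 * t)) * (sinh \<rho> * sin (pi * \<rho> / t) / (cosh \<rho> + cosh \<theta>)\<^sup>2)\<bar>
               \<le> exp ((pi\<^sup>2 - \<rho>\<^sup>2) / (2 * t))"
    unfolding abs_mult abs_of_pos[OF exp_gt_zero] by (rule mult_left_le) simp_all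
  also have "\<dots> \<le> exp (pi\<^sup>2 / (2 * t) + t / 2) * exp (- \<rho>)"
    using exp_strip_weight_le[OF t, of \<rho>] \<open>\<rho> \<ge> 0\<close> by simp
  finally show "\<bar>exp ((pi\<^sup>2 - \<rho>\<^sup>2) / (2 * t)) * sinh \<rho> * sin (pi * \<rho> / t) / (cosh \<rho> + cosh \<theta>)\<^sup>2\<bar>
                  \<le> exp (pi\<^sup>2 / (2 * t) + t / 2) * exp (- \<rho>)"
    by (simp add: mult.assoc)
qed

theorem mainTheorem1:
  fixes t \<theta> :: real
  assumes "t > 0"
  shows "((\<lambda>\<rho>. exp ((pi\<^sup>2 - \<rho>\<^sup>2) / (2 * t)) * sinh \<rho> * sin (pi * \<rho> / t)
              / (cosh \<rho> + cosh \<theta>))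
           has_integral (pi * exp (- (\<theta>\<^sup>2) / (2 * t)))) {0..}
       \<and> (\<exists>I. ((\<lambda>\<rho>. exp ((pi\<^sup>2 - \<rho>\<^sup>2) / (2 * t)) * sinh \<rho> * sin (pi * \<rho> / t)
              / (cosh \<rho> + cosh \<theta>)\<^sup>2) has_integral I) {0..}
            \<and> \<theta> * exp (- (\<theta>\<^sup>2) / (2 * t)) = t * sinh \<theta> / pi * I)"
proof -
  let ?f = "\<lambda>\<rho>. exp ((pi\<^sup>2 - \<rho>\<^sup>2) / (2 * t)) * sinh \<rho> * sin (pi * \<rho> / t) / (cosh \<rho> + cosh \<theta>)\<^sup>2"
  have "\<exists>I. (?f has_integral I) {0..} \<and> \<theta> * exp (- (\<theta>\<^sup>2) / (2 * t)) = t * sinh \<theta> / pi * I"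
  proof (cases "\<theta> = 0")
    case True
    then show ?thesis
      using integrable_sinh_sin_div_cosh_add_cosh_sq[OF assms, of \<theta>] by auto
  next
    case False
    then have "sinh \<theta> \<noteq> 0"
      by simp
    then have "(?f has_integral pi * \<theta> * exp (- \<theta>\<^sup>2 / (2 * t)) / (sinh \<theta> * t)) {0..}"
      using has_integral_mult_right[OF has_integral_sinh_sin_div_cosh_add_cosh_sq[OF assms, of \<theta>],
          of "1 / sinh \<theta>"]
      by simp
    moreover have "\<theta> * exp (- \<theta>\<^sup>2 / (2 * t))
                     = t * sinh \<theta> / pi * (pi * \<theta> * exp (- \<theta>\<^sup>2 / (2 * t)) / (sinh \<theta> * t))"
      using assms \<open>sinh \<theta> \<noteq> 0\<close> by (simp add: field_simps)
    ultimately show ?thesis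
      by blast
  qed
  with has_integral_sinh_sin_div_cosh_add_cosh[OF assms] show ?thesis
    by simp
qed

end
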